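(* Let $G$ be a finite simple graph of order $n(G)$ that is neither edgeless nor complete, and let $\overline{G}$ be its complement. Then ${\rm vs}_{\chi}(G) + {\rm vs}_{\chi}(\overline{G}) \leq n(G) + 1$.
   Context: The chromatic vertex stability number ${\rm vs}_{\chi}(G)$ of a graph $G$ with at least one edge is the minimum number of vertices of $G$ whose deletion results in a graph $H$ with $\chi(H) = \chi(G)-1$, where $\chi$ denotes the chromatic number. *)

theory Defs
  imports Main
begin

text \<open>A finite simple graph is given by a finite vertex set V and a symmetric,
irreflexive adjacency relation E; only pairs of vertices of V matter.\<close>

definition simple_graph :: "'a set \<Rightarrow> ('a \<Rightarrow> 'a \<Rightarrow> bool) \<Rightarrow> bool" where
  "simple_graph V E \<longleftrightarrow> finite V \<and> (\<forall>u\<in>V. \<forall>v\<in>V. E u v \<longrightarrow> E v u) \<and> (\<forall>v\<in>V. \<not> E v v)"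

definition has_edge :: "'a set \<Rightarrow> ('a \<Rightarrow> 'a \<Rightarrow> bool) \<Rightarrow> bool" where
  "has_edge V E \<longleftrightarrow> (\<exists>u\<in>V. \<exists>v\<in>V. E u v)"

definition complete_graph :: "'a set \<Rightarrow> ('a \<Rightarrow> 'a \<Rightarrow> bool) \<Rightarrow> bool" where
  "complete_graph V E \<longleftrightarrow> (\<forall>u\<in>V. \<forall>v\<in>V. u \<noteq> v \<longrightarrow> E u v)"

definition complement :: "('a \<Rightarrow> 'a \<Rightarrow> bool) \<Rightarrow> 'a \<Rightarrow> 'a \<Rightarrow> bool" where
  "complement E u v \<longleftrightarrow> u \<noteq> v \<and> \<not> E u v"

definition proper_colouring :: "'a set \<Rightarrow> ('a \<Rightarrow> 'a \<Rightarrow> bool) \<Rightarrow> nat \<Rightarrow> ('a \<Rightarrow> nat) \<Rightarrow> bool" where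
  "proper_colouring V E k c \<longleftrightarrow> (\<forall>v\<in>V. c v < k) \<and> (\<forall>u\<in>V. \<forall>v\<in>V. E u v \<longrightarrow> c u \<noteq> c v)"

definition chromatic_number :: "'a set \<Rightarrow> ('a \<Rightarrow> 'a \<Rightarrow> bool) \<Rightarrow> nat" where
  "chromatic_number V E = (LEAST k. \<exists>c. proper_colouring V E k c)"

text \<open>Chromatic vertex stability number: minimum number of vertices whose deletion
(taking the induced subgraph on the remaining vertices) lowers the chromatic number by one.\<close>
definition vs_chi :: "'a set \<Rightarrow> ('a \<Rightarrow> 'a \<Rightarrow> bool) \<Rightarrow> nat" where
  "vs_chi V E = (LEAST s. \<exists>S. S \<subseteq> V \<and> card S = s \<and>
                     chromatic_number (V - S) E = chromatic_number V E - 1)"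

end

theory Submission
  imports Defs
begin

text \<open>Deleting one colour class of an optimal colouring lowers the chromatic number by exactly
one, so \<open>vs\<^sub>\<chi>(G)\<close> is at most the size of the smaller of two colour classes, which is at
most \<open>n/2\<close> once \<open>G\<close> has an edge. The same holds for the complement of a non-complete graph,
so the sum is even at most \<open>n\<close>.\<close>

lemma chromatic_number_le:
  "proper_colouring V E k c \<Longrightarrow> chromatic_number V E \<le> k"
  unfolding chromatic_number_def by (rule Least_le) blast

lemma proper_colouring_chromatic_number:
  assumes "finite V" and "\<forall>v\<in>V. \<not> E v v"
  obtains c where "proper_colouring V E (chromatic_number V E) c"
proof -
  obtain h where h: "bij_betw h V {0..<card V}"
    using ex_bij_betw_finite_nat[OF assms(1)] by blast
  have "proper_colouring V E (card V) h"
    unfolding proper_colouring_def using h assms(2)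
    by (auto simp: bij_betw_def inj_on_def)
  then have "\<exists>k c. proper_colouring V E k c" by blast
  then have "\<exists>c. proper_colouring V E (chromatic_number V E) c"
    unfolding chromatic_number_def by (rule LeastI_ex)
  with that show ?thesis by blast
qed

lemma proper_colouring_ge_2:
  assumes "proper_colouring V E k c" and "has_edge V E"
  shows "2 \<le> k"
proof (rule ccontr)
  assume "\<not> 2 \<le> k"
  then have "\<forall>v\<in>V. c v = 0" using assms(1) unfolding proper_colouring_def by auto
  then show False using assms unfolding has_edge_def proper_colouring_def by auto
qed

lemma chromatic_number_Diff_colour_class_le:
  assumes c: "proper_colouring V E k c" and "i < k"
  shows "chromatic_number (V - {v\<in>V. c v = i}) E \<le> k - 1"
proof -
  define d where "d v = (if c v > i then c v - 1 else c v)" for v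
  have "proper_colouring (V - {v\<in>V. c v = i}) E (k - 1) d"
    unfolding proper_colouring_def
  proof (intro conjI ballI impI)
    fix v assume "v \<in> V - {v\<in>V. c v = i}"
    then have "c v < k" "c v \<noteq> i" using c unfolding proper_colouring_def by auto
    then show "d v < k - 1" unfolding d_def using \<open>i < k\<close> by auto
  next
    fix u v assume "u \<in> V - {v\<in>V. c v = i}" "v \<in> V - {v\<in>V. c v = i}" "E u v"
    then have "c u \<noteq> c v" "c u \<noteq> i" "c v \<noteq> i" using c unfolding proper_colouring_def by auto
    then show "d u \<noteq> d v" unfolding d_def by auto
  qed
  then show ?thesis by (rule chromatic_number_le)
qed

lemma chromatic_number_le_Diff_independent:
  assumes "finite V" and "\<forall>v\<in>V. \<not> E v v" and indep: "\<forall>u\<in>I. \<forall>v\<in>I. \<not> E u v"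
  shows "chromatic_number V E \<le> chromatic_number (V - I) E + 1"
proof -
  let ?m = "chromatic_number (V - I) E"
  obtain e where e: "proper_colouring (V - I) E ?m e"
    using proper_colouring_chromatic_number[of "V - I" E] assms(1,2) by auto
  define f where "f v = (if v \<in> I then ?m else e v)" for v
  have "proper_colouring V E (?m + 1) f"
    unfolding proper_colouring_def
  proof (intro conjI ballI impI)
    fix v assume "v \<in> V"
    then have "v \<notin> I \<Longrightarrow> e v < ?m" using e unfolding proper_colouring_def by blast
    then show "f v < ?m + 1" unfolding f_def by auto
  next
    fix u v assume uv: "u \<in> V" "v \<in> V" "E u v"
    have "\<not> (u \<in> I \<and> v \<in> I)" using indep uv by blast
    moreover have "u \<notin> I \<Longrightarrow> e u < ?m" "v \<notin> I \<Longrightarrow> e v < ?m"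
      using e uv unfolding proper_colouring_def by blast+
    moreover have "u \<notin> I \<Longrightarrow> v \<notin> I \<Longrightarrow> e u \<noteq> e v"
      using e uv unfolding proper_colouring_def by blast
    ultimately show "f u \<noteq> f v" unfolding f_def by auto
  qed
  then show ?thesis by (rule chromatic_number_le)
qed

lemma chromatic_number_Diff_colour_class:
  assumes "finite V" and "\<forall>v\<in>V. \<not> E v v"
    and c: "proper_colouring V E (chromatic_number V E) c" and "i < chromatic_number V E"
  shows "chromatic_number (V - {v\<in>V. c v = i}) E = chromatic_number V E - 1"
proof -
  have "\<forall>u\<in>{v\<in>V. c v = i}. \<forall>v\<in>{v\<in>V. c v = i}. \<not> E u v"
    using c unfolding proper_colouring_def by blast
  then have "chromatic_number V E \<le> chromatic_number (V - {v\<in>V. c v = i}) E + 1"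
    using assms(1,2) by (rule chromatic_number_le_Diff_independent[of V E, rotated 2])
  then show ?thesis
    using chromatic_number_Diff_colour_class_le[OF c \<open>i < chromatic_number V E\<close>] by linarith
qed

lemma vs_chi_le_card_colour_class:
  assumes "finite V" and "\<forall>v\<in>V. \<not> E v v"
    and "proper_colouring V E (chromatic_number V E) c" and "i < chromatic_number V E"
  shows "vs_chi V E \<le> card {v\<in>V. c v = i}"
proof -
  have "{v\<in>V. c v = i} \<subseteq> V" by blast
  then show ?thesis
    unfolding vs_chi_def using chromatic_number_Diff_colour_class[of V E, OF assms]
    by (intro Least_le exI[of _ "{v\<in>V. c v = i}"] conjI refl)
qed

lemma vs_chi_le_half_card:
  assumes "simple_graph V E" and "has_edge V E"
  shows "2 * vs_chi V E \<le> card V"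
proof -
  have fin: "finite V" and irr: "\<forall>v\<in>V. \<not> E v v"
    using assms(1) unfolding simple_graph_def by auto
  obtain c where c: "proper_colouring V E (chromatic_number V E) c"
    using proper_colouring_chromatic_number[of V E, OF fin irr] by blast
  have "2 \<le> chromatic_number V E" using c assms(2) by (rule proper_colouring_ge_2)
  then have "vs_chi V E \<le> card {v\<in>V. c v = 0}" "vs_chi V E \<le> card {v\<in>V. c v = 1}"
    using vs_chi_le_card_colour_class[of V E, OF fin irr c] by auto
  moreover have "card {v\<in>V. c v = 0} + card {v\<in>V. c v = 1} \<le> card V"
  proof -
    have "card {v\<in>V. c v = 0} + card {v\<in>V. c v = 1} = card ({v\<in>V. c v = 0} \<union> {v\<in>V. c v = 1})"
      using fin by (intro card_Un_disjoint[symmetric]) auto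
    also have "\<dots> \<le> card V" using fin by (intro card_mono) auto
    finally show ?thesis .
  qed
  ultimately show ?thesis by linarith
qed

lemma simple_graph_complement: "simple_graph V E \<Longrightarrow> simple_graph V (complement E)"
  unfolding simple_graph_def complement_def by auto

lemma has_edge_complement_iff: "has_edge V (complement E) \<longleftrightarrow> \<not> complete_graph V E"
  unfolding has_edge_def complete_graph_def complement_def by auto

theorem proposition5:
  fixes V :: "'a set" and E :: "'a \<Rightarrow> 'a \<Rightarrow> bool"
  assumes "simple_graph V E"
    and "has_edge V E"
    and "\<not> complete_graph V E"
  shows "vs_chi V E + vs_chi V (complement E) \<le> card V + 1"
proof -
  have "2 * vs_chi V E \<le> card V"
    using assms(1,2) by (rule vs_chi_le_half_card)
  moreover have "2 * vs_chi V (complement E) \<le> card V"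
    using simple_graph_complement[OF assms(1)] assms(3)
    by (intro vs_chi_le_half_card) (simp_all add: has_edge_complement_iff)
  ultimately show ?thesis by linarith
qed

end
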